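(* Let $F$ be a continuous distribution function with $F(0)=0$ and density $f:[0,\infty)\to[0,\infty)$, such that there are constants $c>0$, $\tau>3$ with $1-F(x)\le cx^{1-\tau}$ for all $x\ge0$. Assume further that there exists $a>0$ such that, as $y\downarrow0$, $$\int_y^1\frac{\bar F^{-1}(u)}{\underline f(\bar F^{-1}(u))}\,du=O(y^{-a}),$$ where $\underline f(x)=\inf_{0\le y\le x}f(y)$. For $u\in(0,1)$ let $u_N=\lceil uN\rceil/N$. Then there exists $\alpha>0$ such that $$\int_0^1\bar F^{-1}(u)\big(\bar F^{-1}(u)-\bar F^{-1}(u_N)\big)\,du=O(N^{-\alpha}),$$ and, for $i=1,2$, $$\int_0^1\big(\bar F^{-1}(u)^i-\bar F^{-1}(u_N)^i\big)\,du=O(N^{-\alpha}).$$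
   Context: $\bar F(x)=1-F(x)$ and, for $u\in(0,1)$, $\bar F^{-1}(u)=\inf\{s:\bar F(s)\le u\}$ (so $\bar F^{-1}$ is non-increasing and $\bar F^{-1}(U)$ has distribution $F$ for $U$ uniform on $(0,1)$). *)

theory Defs
  imports "HOL-Analysis.Analysis" "HOL-Library.Landau_Symbols"
begin

definition surv_inv :: "(real \<Rightarrow> real) \<Rightarrow> real \<Rightarrow> real" where
  "surv_inv F u = Inf {s. 1 - F s \<le> u}"

definition dens_low :: "(real \<Rightarrow> real) \<Rightarrow> real \<Rightarrow> real" where
  "dens_low f x = Inf (f ` {0..x})"

definition grid_round :: "nat \<Rightarrow> real \<Rightarrow> real" where
  "grid_round N u = real_of_int (ceiling (u * real N)) / real N"

end

theory Submission
  imports Defs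
begin

(*
  The tail bound gives surv_inv F u <= (c/u) powr beta with beta = 1/(tau - 1) < 1/2,
  so Q = surv_inv F and Q^2 are antitone on (0,1) and dominated by a multiple of u powr -gamma with
  gamma = 2 beta < 1. For such a G the grid error G u - G u_N is controlled cell by cell: on the first
  cell by the integrable singularity (contributing O(N powr (gamma - 1))), on the inner cells by the
  oscillations G(k/N) - G((k+1)/N), which telescope to at most G(1/N)/N = O(N powr (gamma - 1)), and on
  the last cell, where u_N = 1, by a constant (contributing O(1/N)). All three integrands are dominated
  by such grid errors, so alpha = 1 - 2 beta works. Beyond the tail bound only monotonicity of F,
  F 0 = 0 and F -> 1 are used.
*)

lemma set_integrable_powr_from_0:
  fixes a c :: real
  assumes "-1 < a" "0 \<le> c"
  shows "set_integrable lborel {0..c} (\<lambda>x. x powr a)"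
    and "(LINT x:{0..c}|lborel. x powr a) = c powr (a + 1) / (a + 1)"
proof -
  have int: "((\<lambda>x. x powr a) has_integral (c powr (a + 1) / (a + 1))) {0..c}"
    using has_integral_powr_from_0[OF assms] .
  then have "(\<lambda>x. x powr a) absolutely_integrable_on {0..c}"
    by (intro nonnegative_absolutely_integrable_1) (auto simp: integrable_on_def)
  then show si: "set_integrable lborel {0..c} (\<lambda>x. x powr a)"
    unfolding set_integrable_def by (subst (asm) integrable_completion) auto
  show "(LINT x:{0..c}|lborel. x powr a) = c powr (a + 1) / (a + 1)"
    using set_borel_integral_eq_integral(2)[OF si] int by (simp add: integral_unique)
qed

lemma set_borel_measurable_antimono_on:
  fixes G :: "real \<Rightarrow> real"
  assumes "antimono_on A G" "A \<in> sets borel"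
  shows "set_borel_measurable lborel A G"
proof -
  have "mono_on A (\<lambda>u. - G u)"
    using assms(1) by (auto simp: monotone_on_def)
  then have "(\<lambda>u. - G u) \<in> borel_measurable (restrict_space borel A)"
    by (rule borel_measurable_mono_on_fnc)
  then have "(\<lambda>u. - (indicator A u *\<^sub>R - G u)) \<in> borel_measurable borel"
    using assms(2) by (subst (asm) borel_measurable_restrict_space_iff) auto
  then show ?thesis
    by (simp add: set_borel_measurable_def)
qed

lemma set_integrable_of_powr_bound:
  fixes G :: "real \<Rightarrow> real"
  assumes "set_borel_measurable lborel {0<..<1} G" "\<gamma> < 1"
    and "\<And>u. 0 < u \<Longrightarrow> u < 1 \<Longrightarrow> \<bar>G u\<bar> \<le> C * u powr - \<gamma>"
  shows "set_integrable lborel {0<..<1} G"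
proof (rule set_integrable_bound[OF _ assms(1)])
  have "set_integrable lborel {0..1} (\<lambda>u. u powr - \<gamma>)"
    using set_integrable_powr_from_0(1)[of "- \<gamma>" 1] assms(2) by simp
  then have powr: "set_integrable lborel {0<..<1} (\<lambda>u. u powr - \<gamma>)"
    by (rule set_integrable_subset) auto
  show "set_integrable lborel {0<..<1} (\<lambda>u. C * u powr - \<gamma>)"
    by (rule set_integrable_mult_right, rule powr)
  show "AE u in lborel. u \<in> {0<..<1} \<longrightarrow> norm (G u) \<le> norm (C * u powr - \<gamma>)"
  proof (rule AE_I2, rule impI)
    fix u :: real
    assume "u \<in> {0<..<1}"
    then show "norm (G u) \<le> norm (C * u powr - \<gamma>)"
      using assms(3)[of u] abs_ge_self[of "C * u powr - \<gamma>"] by auto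
  qed
qed

section \<open>The generalised inverse of the survival function\<close>

context
  fixes F :: "real \<Rightarrow> real"
  assumes F_mono: "mono F" and F_top: "(F \<longlongrightarrow> 1) at_top" and F0: "F 0 = 0"
begin

lemma surv_inv_set_nonempty:
  assumes "0 < u"
  shows "{s. 1 - F s \<le> u} \<noteq> {}"
proof -
  have "eventually (\<lambda>x. 1 - u < F x) at_top"
    using order_tendstoD(1)[OF F_top] assms by simp
  then obtain x where "1 - u < F x"
    by (auto simp: eventually_at_top_linorder)
  then show ?thesis
    by (auto intro!: exI[of _ x])
qed

lemma surv_inv_set_pos:
  assumes "u < 1" "1 - F s \<le> u"
  shows "0 < s"
  using assms F0 monoD[OF F_mono, of s 0] by (cases "s \<le> 0") auto

lemma bdd_below_surv_inv_set: "u < 1 \<Longrightarrow> bdd_below {s. 1 - F s \<le> u}"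
  by (auto intro!: bdd_belowI[of _ 0] dest: surv_inv_set_pos)

lemma surv_inv_nonneg: "0 < u \<Longrightarrow> u < 1 \<Longrightarrow> 0 \<le> surv_inv F u"
  unfolding surv_inv_def
  by (rule cInf_greatest[OF surv_inv_set_nonempty]) (auto dest: surv_inv_set_pos)

lemma surv_inv_le: "u < 1 \<Longrightarrow> 1 - F x \<le> u \<Longrightarrow> surv_inv F u \<le> x"
  unfolding surv_inv_def by (intro cInf_lower bdd_below_surv_inv_set) auto

lemma antimono_on_surv_inv: "antimono_on {0<..<1} (surv_inv F)"
  unfolding surv_inv_def
  by (intro monotone_onI cInf_superset_mono surv_inv_set_nonempty bdd_below_surv_inv_set) auto

lemma surv_inv_le_powr:
  assumes "0 < c" "1 < \<tau>" and tail: "\<And>x. 0 < x \<Longrightarrow> 1 - F x \<le> c * x powr (1 - \<tau>)"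
    and "0 < u" "u < 1"
  shows "surv_inv F u \<le> c powr (1 / (\<tau> - 1)) * u powr - (1 / (\<tau> - 1))"
proof -
  define x where "x = (c / u) powr (1 / (\<tau> - 1))"
  have "0 < x"
    using assms by (simp add: x_def)
  have "x powr (1 - \<tau>) = (c / u) powr (1 / (\<tau> - 1) * (1 - \<tau>))"
    by (simp add: x_def powr_powr)
  also have "1 / (\<tau> - 1) * (1 - \<tau>) = -1"
    using assms by (simp add: field_simps)
  finally have "x powr (1 - \<tau>) = u / c"
    using assms by (simp add: powr_minus_divide)
  then have "1 - F x \<le> u"
    using tail[OF \<open>0 < x\<close>] assms by simp
  then have "surv_inv F u \<le> x"
    using assms by (intro surv_inv_le) auto
  also have "x = c powr (1 / (\<tau> - 1)) * u powr - (1 / (\<tau> - 1))"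
    using assms by (simp add: x_def powr_divide powr_minus divide_inverse powr_mult inverse_powr)
  finally show ?thesis .
qed

end

section \<open>Grid cells and grid rounding\<close>

definition grid_cell :: "nat \<Rightarrow> nat \<Rightarrow> real set" where
  "grid_cell N k = {real k / real N <.. real (Suc k) / real N}"

lemma grid_cell_unique:
  assumes "u \<in> grid_cell N j" "u \<in> grid_cell N k"
  shows "j = k"
proof (cases "N = 0")
  case False
  then have "real j < u * real N" "u * real N \<le> real (Suc j)"
    "real k < u * real N" "u * real N \<le> real (Suc k)"
    using assms by (auto simp: grid_cell_def field_simps)
  then show ?thesis
    by linarith
qed (use assms in \<open>simp add: grid_cell_def\<close>)

lemma grid_round_cell:
  assumes "1 \<le> N" "0 < u" "u < 1"
  obtains k where "k < N" "u \<in> grid_cell N k" "grid_round N u = real (Suc k) / real N"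
proof
  define m where "m = \<lceil>u * real N\<rceil>"
  have "0 < u * real N" "u * real N < real N"
    using assms by auto
  then have m: "1 \<le> m" "m \<le> int N" "real_of_int m - 1 < u * real N" "u * real N \<le> real_of_int m"
    unfolding m_def by linarith+
  show "nat (m - 1) < N"
    using m by linarith
  have Suc: "real (Suc (nat (m - 1))) = real_of_int m"
    using m by simp
  show "u \<in> grid_cell N (nat (m - 1))"
    using m assms unfolding grid_cell_def Suc by (auto simp: field_simps)
  show "grid_round N u = real (Suc (nat (m - 1))) / real N"
    using Suc by (simp add: grid_round_def m_def)
qed

lemma grid_round_ge: "1 \<le> N \<Longrightarrow> u \<le> grid_round N u"
  unfolding grid_round_def by (simp add: field_simps)

lemma grid_round_pos: "1 \<le> N \<Longrightarrow> 0 < u \<Longrightarrow> 0 < grid_round N u"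
  using grid_round_ge[of N u] by linarith

lemma grid_round_eq_1_imp_half_le:
  assumes "2 \<le> N" "0 < u" "u < 1" "grid_round N u = 1"
  shows "1/2 \<le> u"
proof -
  obtain k where k: "k < N" "u \<in> grid_cell N k" "grid_round N u = real (Suc k) / real N"
    using grid_round_cell[of N u] assms by auto
  then have "Suc k = N"
    using assms by (simp add: field_simps)
  then have "1/2 \<le> real k / real N"
    using assms by (simp add: field_simps)
  moreover have "real k / real N < u"
    using k by (simp add: grid_cell_def)
  ultimately show ?thesis
    by linarith
qed

lemma sum_indicator_grid_cell:
  fixes a :: "nat \<Rightarrow> real"
  assumes "finite A" "u \<in> grid_cell N j"
  shows "(\<Sum>k\<in>A. a k * indicator (grid_cell N k) u) = (if j \<in> A then a j else 0)"
proof -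
  have "a k * indicator (grid_cell N k) u = (if k = j then a k else 0)" for k
    using assms(2) by (auto simp: indicator_def dest: grid_cell_unique[OF assms(2)])
  then show ?thesis
    using assms(1) by (simp del: sum_mult_indicator)
qed

lemma emeasure_grid_cell: "emeasure lborel (grid_cell N k) = ennreal (1 / real N)"
proof -
  have "real k / real N \<le> real (Suc k) / real N"
    by (simp add: divide_right_mono)
  then show ?thesis
    by (simp add: grid_cell_def diff_divide_distrib[symmetric])
qed

lemma integrable_grid_cell [simp]: "integrable lborel (indicator (grid_cell N k) :: real \<Rightarrow> real)"
proof (rule integrable_real_indicator)
  show "grid_cell N k \<in> sets lborel"
    by (simp add: grid_cell_def)
qed (simp add: emeasure_grid_cell)

lemma integral_grid_step:
  fixes a :: "nat \<Rightarrow> real"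
  shows "integrable lborel (\<lambda>u. \<Sum>k\<in>A. a k * indicator (grid_cell N k) u)"
    and "(\<integral>u. (\<Sum>k\<in>A. a k * indicator (grid_cell N k) u) \<partial>lborel) = (\<Sum>k\<in>A. a k) / real N"
proof -
  have "measure lborel (grid_cell N k) = 1 / real N" for k
    using emeasure_grid_cell by (simp add: measure_def)
  then show "(\<integral>u. (\<Sum>k\<in>A. a k * indicator (grid_cell N k) u) \<partial>lborel) = (\<Sum>k\<in>A. a k) / real N"
    by (simp add: sum_divide_distrib)
qed simp

lemma set_integrable_mult_grid_round:
  fixes f G :: "real \<Rightarrow> real"
  assumes f: "set_integrable lborel {0<..<1} f" and N: "1 \<le> N"
  shows "set_integrable lborel {0<..<1} (\<lambda>u. f u * G (grid_round N u))"
proof -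
  have cell: "integrable lborel (\<lambda>u. (indicator {0<..<1} u * f u) * indicator (grid_cell N k) u)" for k
    by (rule integrable_real_mult_indicator) (use f in \<open>auto simp: set_integrable_def grid_cell_def\<close>)
  have "integrable lborel (\<lambda>u. \<Sum>k<N. G (real (Suc k) / real N) *
      ((indicator {0<..<1} u * f u) * indicator (grid_cell N k) u))"
    by (intro Bochner_Integration.integrable_sum integrable_mult_right cell)
  also have "(\<lambda>u. \<Sum>k<N. G (real (Suc k) / real N) *
      ((indicator {0<..<1} u * f u) * indicator (grid_cell N k) u)) =
      (\<lambda>u. indicator {0<..<1} u *\<^sub>R (f u * G (grid_round N u)))"
  proof
    fix u :: real
    show "(\<Sum>k<N. G (real (Suc k) / real N) * ((indicator {0<..<1} u * f u) * indicator (grid_cell N k) u)) =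
        indicator {0<..<1} u *\<^sub>R (f u * G (grid_round N u))"
    proof (cases "0 < u \<and> u < 1")
      case True
      then obtain j where j: "j < N" "u \<in> grid_cell N j" "grid_round N u = real (Suc j) / real N"
        using grid_round_cell[OF N] by blast
      show ?thesis
        using sum_indicator_grid_cell[OF _ j(2), where A = "{..<N}"
            and a = "\<lambda>k. G (real (Suc k) / real N) * (indicator {0<..<1} u * f u)"] j True
        by (simp add: mult_ac)
    qed simp
  qed
  finally show ?thesis
    unfolding set_integrable_def .
qed

lemma set_integrable_grid_round:
  fixes G :: "real \<Rightarrow> real"
  assumes "1 \<le> N"
  shows "set_integrable lborel {0<..<1} (\<lambda>u. G (grid_round N u))"
proof -
  have "set_integrable lborel {0<..<1} (\<lambda>u::real. 1 :: real)"
    unfolding set_integrable_def by simp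
  from set_integrable_mult_grid_round[OF this assms] show ?thesis
    by simp
qed

section \<open>The grid error of an antitone function\<close>

(*
  The first summand dominates the error on the first cell, the k-th term of the sum on the inner
  cell k, and M on the last cell, where u_N = 1 and G 1 may be a junk value (surv_inv F 1 = Inf UNIV).
*)
definition grid_majorant :: "(real \<Rightarrow> real) \<Rightarrow> real \<Rightarrow> real \<Rightarrow> real \<Rightarrow> nat \<Rightarrow> real \<Rightarrow> real" where
  "grid_majorant G D \<gamma> M N u =
     D * (indicator {0..1 / real N} u * u powr - \<gamma>)
     + (\<Sum>k\<in>{1..<N - 1}. (G (real k / real N) - G (real (Suc k) / real N)) * indicator (grid_cell N k) u)
     + M * indicator (grid_cell N (N - 1)) u"

lemma integral_grid_majorant:
  assumes "2 \<le> N" "\<gamma> < 1"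
  shows "integrable lborel (grid_majorant G D \<gamma> M N)"
    and "integral\<^sup>L lborel (grid_majorant G D \<gamma> M N) =
      D * real N powr - (1 - \<gamma>) / (1 - \<gamma>) + (G (1 / real N) - G (real (N - 1) / real N)) / real N
      + M / real N"
proof -
  have "(1 / real N) powr (1 - \<gamma>) = 1 / real N powr (1 - \<gamma>)"
    by (simp add: powr_divide)
  also have "\<dots> = real N powr - (1 - \<gamma>)"
    by (rule powr_minus_divide[symmetric])
  finally have "(1 / real N) powr (- \<gamma> + 1) = real N powr - (1 - \<gamma>)"
    by simp
  then have powr: "integrable lborel (\<lambda>u. indicator {0..1 / real N} u * u powr - \<gamma>)"
    "(\<integral>u. indicator {0..1 / real N} u * u powr - \<gamma> \<partial>lborel) = real N powr - (1 - \<gamma>) / (1 - \<gamma>)"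
    using set_integrable_powr_from_0[of "- \<gamma>" "1 / real N"] assms
    by (simp_all add: set_integrable_def set_lebesgue_integral_def)
  define g where "g k = G (real k / real N)" for k
  have telescope: "(\<Sum>k\<in>{1..<N - 1}. g k - g (Suc k)) = g 1 - g (N - 1)"
    using sum_Suc_diff'[of 1 "N - 1" "\<lambda>k. - g k"] assms by simp
  have cell: "(\<integral>u. indicator (grid_cell N (N - 1)) u \<partial>lborel) = 1 / real N"
    using emeasure_grid_cell[of N "N - 1"] by (simp add: measure_def)
  show "integrable lborel (grid_majorant G D \<gamma> M N)"
    unfolding grid_majorant_def using powr integral_grid_step(1) by (simp del: sum_mult_indicator)
  show "integral\<^sup>L lborel (grid_majorant G D \<gamma> M N) =
      D * real N powr - (1 - \<gamma>) / (1 - \<gamma>) + (G (1 / real N) - G (real (N - 1) / real N)) / real N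
      + M / real N"
    unfolding grid_majorant_def using powr integral_grid_step cell telescope
    by (simp add: g_def del: sum_mult_indicator)
qed

lemma grid_majorant_nonneg:
  assumes G_anti: "antimono_on {0<..<1} G" and "0 \<le> D" "0 \<le> M"
  shows "0 \<le> grid_majorant G D \<gamma> M N u"
proof -
  have "G (real (Suc k) / real N) \<le> G (real k / real N)" if "k \<in> {1..<N - 1}" for k
    using that by (intro monotone_onD[OF G_anti]) (auto simp: field_simps)
  then show ?thesis
    unfolding grid_majorant_def using assms
    by (intro add_nonneg_nonneg mult_nonneg_nonneg sum_nonneg) auto
qed

lemma grid_majorant_cell:
  assumes "u \<in> grid_cell N k"
  shows "grid_majorant G D \<gamma> M N u = D * (indicator {0..1 / real N} u * u powr - \<gamma>)
      + (if k \<in> {1..<N - 1} then G (real k / real N) - G (real (Suc k) / real N) else 0)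
      + (if k = N - 1 then M else 0)"
proof -
  have inner_cells: "(\<Sum>i\<in>{1..<N - 1}.
      (G (real i / real N) - G (real (Suc i) / real N)) * indicator (grid_cell N i) u) =
      (if k \<in> {1..<N - 1} then G (real k / real N) - G (real (Suc k) / real N) else 0)"
    by (rule sum_indicator_grid_cell[OF _ assms]) simp
  have last_cell: "indicator (grid_cell N (N - 1)) u = (if k = N - 1 then 1 else 0)"
    using assms by (auto simp: indicator_def dest: grid_cell_unique[OF assms])
  show ?thesis
    unfolding grid_majorant_def inner_cells last_cell by simp
qed

lemma abs_le_grid_majorant:
  fixes G h :: "real \<Rightarrow> real"
  assumes G_anti: "antimono_on {0<..<1} G"
    and G_nonneg: "\<And>u. 0 < u \<Longrightarrow> u < 1 \<Longrightarrow> 0 \<le> G u"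
    and G_le: "\<And>u. 0 < u \<Longrightarrow> u < 1 \<Longrightarrow> G u \<le> D * u powr - \<gamma>"
    and "0 \<le> D" "0 \<le> M" and N: "2 \<le> N"
    and h_inner: "\<And>u. 0 < u \<Longrightarrow> u < 1 \<Longrightarrow> grid_round N u < 1 \<Longrightarrow>
      \<bar>h u\<bar> \<le> G u - G (grid_round N u)"
    and h_last: "\<And>u. 0 < u \<Longrightarrow> u < 1 \<Longrightarrow> grid_round N u = 1 \<Longrightarrow> \<bar>h u\<bar> \<le> M"
  shows "\<bar>indicator {0<..<1} u * h u\<bar> \<le> grid_majorant G D \<gamma> M N u"
proof (cases "0 < u \<and> u < 1")
  case False
  then show ?thesis
    using grid_majorant_nonneg[OF G_anti \<open>0 \<le> D\<close> \<open>0 \<le> M\<close>, of \<gamma> N u] by simp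
next
  case True
  then have u: "0 < u" "u < 1" by auto
  obtain k where k: "k < N" "u \<in> grid_cell N k" "grid_round N u = real (Suc k) / real N"
    using grid_round_cell[of N u] N u by auto
  have u_cell: "real k / real N < u" "u \<le> real (Suc k) / real N"
    using k(2) by (auto simp: grid_cell_def)
  note majorant = grid_majorant_cell[OF k(2), of G D \<gamma> M]
  have singular_nonneg: "0 \<le> D * (indicator {0..1 / real N} u * u powr - \<gamma>)"
    using \<open>0 \<le> D\<close> by simp
  consider "k = N - 1" | "k = 0" | "k \<in> {1..<N - 1}"
    using k N by fastforce
  then show ?thesis
  proof cases
    case 1
    then have "grid_round N u = 1"
      using k(3) N by simp
    then show ?thesis
      using h_last[OF u] majorant singular_nonneg 1 u by simp
  next
    case 2
    then have "\<bar>h u\<bar> \<le> G u - G (1 / real N)"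
      using h_inner[OF u] k(3) N by simp
    also have "\<dots> \<le> D * u powr - \<gamma>"
      using G_nonneg[of "1 / real N"] G_le[OF u] N by simp
    finally show ?thesis
      using majorant u u_cell 2 N by (simp add: indicator_def)
  next
    case 3
    then have "real (Suc k) < real N"
      by (simp only: of_nat_less_iff) auto
    then have "grid_round N u < 1"
      using k(3) N by (simp add: divide_less_eq)
    then have "\<bar>h u\<bar> \<le> G u - G (real (Suc k) / real N)"
      using h_inner[OF u] k(3) by simp
    also have "\<dots> \<le> G (real k / real N) - G (real (Suc k) / real N)"
      using 3 u_cell u N by (auto intro!: monotone_onD[OF G_anti])
    finally show ?thesis
      using majorant singular_nonneg u 3 by simp
  qed
qed

lemma integral_grid_majorant_le:
  assumes G_nonneg: "\<And>u. 0 < u \<Longrightarrow> u < 1 \<Longrightarrow> 0 \<le> G u"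
    and G_le: "\<And>u. 0 < u \<Longrightarrow> u < 1 \<Longrightarrow> G u \<le> D * u powr - \<gamma>"
    and "0 \<le> \<gamma>" "\<gamma> < 1" "0 \<le> M" and N: "2 \<le> N"
  shows "integral\<^sup>L lborel (grid_majorant G D \<gamma> M N) \<le> (D / (1 - \<gamma>) + D + M) * real N powr - (1 - \<gamma>)"
proof -
  have "G (1 / real N) - G (real (N - 1) / real N) \<le> D * (1 / real N) powr - \<gamma>"
    using G_nonneg[of "real (N - 1) / real N"] G_le[of "1 / real N"] N by (simp add: field_simps)
  also have "\<dots> = D * real N powr \<gamma>"
    using N by (simp add: powr_divide powr_minus_divide)
  finally have "(G (1 / real N) - G (real (N - 1) / real N)) / real N \<le> D * (real N powr \<gamma> / real N)"
    using N by (simp add: divide_right_mono)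
  also have "real N powr \<gamma> / real N = real N powr - (1 - \<gamma>)"
    using N by (simp add: powr_diff powr_minus_divide)
  finally have telescoped:
    "(G (1 / real N) - G (real (N - 1) / real N)) / real N \<le> D * real N powr - (1 - \<gamma>)" .
  have "1 / real N \<le> real N powr - (1 - \<gamma>)"
    using powr_mono[of "-1" "- (1 - \<gamma>)" "real N"] N \<open>0 \<le> \<gamma>\<close> by (simp add: powr_minus_divide)
  then have "M / real N \<le> M * real N powr - (1 - \<gamma>)"
    using mult_left_mono[OF _ \<open>0 \<le> M\<close>] by (simp add: divide_inverse)
  with telescoped show ?thesis
    using integral_grid_majorant(2)[OF N \<open>\<gamma> < 1\<close>, where G = G and D = D and M = M]
    by (simp add: algebra_simps add_divide_distrib)
qed

lemma grid_error_bigo: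
  fixes G :: "real \<Rightarrow> real" and h :: "nat \<Rightarrow> real \<Rightarrow> real"
  assumes G_anti: "antimono_on {0<..<1} G"
    and G_nonneg: "\<And>u. 0 < u \<Longrightarrow> u < 1 \<Longrightarrow> 0 \<le> G u"
    and G_le: "\<And>u. 0 < u \<Longrightarrow> u < 1 \<Longrightarrow> G u \<le> D * u powr - \<gamma>"
    and D_nonneg: "0 \<le> D" and \<gamma>: "0 \<le> \<gamma>" "\<gamma> < 1" and M_nonneg: "0 \<le> M"
    and h_int: "\<And>N. 2 \<le> N \<Longrightarrow> set_integrable lborel {0<..<1} (h N)"
    and h_inner: "\<And>N u. 2 \<le> N \<Longrightarrow> 0 < u \<Longrightarrow> u < 1 \<Longrightarrow> grid_round N u < 1 \<Longrightarrow>
      \<bar>h N u\<bar> \<le> G u - G (grid_round N u)"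
    and h_last: "\<And>N u. 2 \<le> N \<Longrightarrow> 0 < u \<Longrightarrow> u < 1 \<Longrightarrow> grid_round N u = 1 \<Longrightarrow> \<bar>h N u\<bar> \<le> M"
  shows "(\<lambda>N. LINT u:{0<..<1}|lborel. h N u) \<in> O(\<lambda>N. real N powr - (1 - \<gamma>))"
proof (rule bigoI)
  have "\<bar>LINT u:{0<..<1}|lborel. h N u\<bar> \<le> (D / (1 - \<gamma>) + D + M) * real N powr - (1 - \<gamma>)"
    if N: "2 \<le> N" for N
  proof -
    have "\<bar>indicator {0<..<1} u * h N u\<bar> \<le> grid_majorant G D \<gamma> M N u" for u
      using G_anti G_nonneg G_le D_nonneg M_nonneg N h_inner[OF N] h_last[OF N]
      by (rule abs_le_grid_majorant)
    then have "\<bar>\<integral>u. indicator {0<..<1} u * h N u \<partial>lborel\<bar>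
        \<le> integral\<^sup>L lborel (grid_majorant G D \<gamma> M N)"
      using h_int[OF N] integral_grid_majorant(1)[OF N \<gamma>(2)]
      by (intro integral_abs_bound_integral) (simp_all add: set_integrable_def)
    then have "\<bar>LINT u:{0<..<1}|lborel. h N u\<bar> \<le> integral\<^sup>L lborel (grid_majorant G D \<gamma> M N)"
      by (simp add: set_lebesgue_integral_def)
    also have "\<dots> \<le> (D / (1 - \<gamma>) + D + M) * real N powr - (1 - \<gamma>)"
      by (rule integral_grid_majorant_le[OF G_nonneg G_le \<gamma> M_nonneg N])
    finally show ?thesis .
  qed
  then show "\<forall>\<^sub>F N in at_top. norm (LINT u:{0<..<1}|lborel. h N u)
      \<le> (D / (1 - \<gamma>) + D + M) * norm (real N powr - (1 - \<gamma>))"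
    by (auto simp: eventually_at_top_linorder intro!: exI[of _ 2])
qed

locale antitone_powr_bounded =
  fixes Q :: "real \<Rightarrow> real" and D \<beta> :: real
  assumes Q_anti: "antimono_on {0<..<1} Q"
    and Q_nonneg: "\<And>u. 0 < u \<Longrightarrow> u < 1 \<Longrightarrow> 0 \<le> Q u"
    and Q_le: "\<And>u. 0 < u \<Longrightarrow> u < 1 \<Longrightarrow> Q u \<le> D * u powr - \<beta>"
    and \<beta>: "0 \<le> \<beta>" "\<beta> < 1/2"
begin

lemma powr_bound_nonneg: "0 \<le> D"
proof -
  have "0 \<le> D * (1/2) powr - \<beta>"
    using Q_nonneg[of "1/2"] Q_le[of "1/2"] by simp
  then show ?thesis
    by (simp add: zero_le_mult_iff)
qed

lemma Q_le_powr_double: "0 < u \<Longrightarrow> u < 1 \<Longrightarrow> Q u \<le> D * u powr - (2 * \<beta>)"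
proof -
  assume u: "0 < u" "u < 1"
  have "u powr - \<beta> \<le> u powr - (2 * \<beta>)"
    using u \<beta> by (intro powr_mono') auto
  then show ?thesis
    using Q_le[OF u] powr_bound_nonneg by (meson mult_left_mono order_trans)
qed

lemma Q_sq_le_powr: "0 < u \<Longrightarrow> u < 1 \<Longrightarrow> Q u ^ 2 \<le> D\<^sup>2 * u powr - (2 * \<beta>)"
proof -
  assume u: "0 < u" "u < 1"
  have "Q u ^ 2 \<le> (D * u powr - \<beta>) ^ 2"
    using Q_le[OF u] Q_nonneg[OF u] by (intro power_mono) auto
  also have "\<dots> = D\<^sup>2 * u powr - (2 * \<beta>)"
    by (simp add: power_mult_distrib powr_add[symmetric] power2_eq_square)
  finally show ?thesis .
qed

lemma antimono_on_Q_sq: "antimono_on {0<..<1} (\<lambda>u. Q u ^ 2)"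
  by (intro monotone_onI power_mono monotone_onD[OF Q_anti] Q_nonneg) auto

lemma set_integrable_Q: "set_integrable lborel {0<..<1} Q"
  using Q_le_powr_double Q_nonneg \<beta>
  by (intro set_integrable_of_powr_bound[of _ "2 * \<beta>" D] set_borel_measurable_antimono_on Q_anti) auto

lemma set_integrable_Q_sq: "set_integrable lborel {0<..<1} (\<lambda>u. Q u ^ 2)"
  using Q_sq_le_powr \<beta>
  by (intro set_integrable_of_powr_bound[of _ "2 * \<beta>" "D\<^sup>2"] set_borel_measurable_antimono_on
      antimono_on_Q_sq) auto

lemma Q_grid_round_le:
  assumes "1 \<le> N" "0 < u" "u < 1" "grid_round N u < 1"
  shows "0 \<le> Q (grid_round N u)" "Q (grid_round N u) \<le> Q u"
  using assms grid_round_ge[of N u] grid_round_pos[of N u]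
  by (auto intro!: Q_nonneg monotone_onD[OF Q_anti])

lemma Q_last_cell:
  assumes "2 \<le> N" "0 < u" "u < 1" "grid_round N u = 1"
  shows "0 \<le> Q u" "Q u \<le> Q (1/2)"
  using assms grid_round_eq_1_imp_half_le[OF assms] by (auto intro!: Q_nonneg monotone_onD[OF Q_anti])

lemma grid_error_diff:
  "(\<forall>N\<ge>1. set_integrable lborel {0<..<1} (\<lambda>u. Q u - Q (grid_round N u)))
   \<and> (\<lambda>N. LINT u:{0<..<1}|lborel. Q u - Q (grid_round N u)) \<in> O(\<lambda>N. real N powr - (1 - 2 * \<beta>))"
  (is "_ \<and> ?bigo")
proof -
  have int: "set_integrable lborel {0<..<1} (\<lambda>u. Q u - Q (grid_round N u))" if "1 \<le> N" for N
    using set_integrable_Q set_integrable_grid_round[OF that] by (rule set_integral_diff(1))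
  have inner: "\<bar>Q u - Q (grid_round N u)\<bar> \<le> Q u - Q (grid_round N u)"
    if "2 \<le> N" "0 < u" "u < 1" "grid_round N u < 1" for N u
    using Q_grid_round_le[of N u] that by simp
  have last: "\<bar>Q u - Q (grid_round N u)\<bar> \<le> Q (1/2) + \<bar>Q 1\<bar>"
    if "2 \<le> N" "0 < u" "u < 1" "grid_round N u = 1" for N u
    using Q_last_cell[OF that] that(4) by simp
  have ?bigo
    by (rule grid_error_bigo[where G = Q and D = D and M = "Q (1/2) + \<bar>Q 1\<bar>"])
      (use Q_anti Q_nonneg Q_le_powr_double powr_bound_nonneg \<beta> int inner last in auto)
  with int show ?thesis
    by blast
qed

lemma grid_error_diff_sq:
  "(\<forall>N\<ge>1. set_integrable lborel {0<..<1} (\<lambda>u. Q u ^ 2 - Q (grid_round N u) ^ 2))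
   \<and> (\<lambda>N. LINT u:{0<..<1}|lborel. Q u ^ 2 - Q (grid_round N u) ^ 2) \<in> O(\<lambda>N. real N powr - (1 - 2 * \<beta>))"
  (is "_ \<and> ?bigo")
proof -
  have int: "set_integrable lborel {0<..<1} (\<lambda>u. Q u ^ 2 - Q (grid_round N u) ^ 2)" if "1 \<le> N" for N
    using set_integrable_Q_sq set_integrable_grid_round[OF that, of "\<lambda>x. Q x ^ 2"]
    by (rule set_integral_diff(1))
  have inner: "\<bar>Q u ^ 2 - Q (grid_round N u) ^ 2\<bar> \<le> Q u ^ 2 - Q (grid_round N u) ^ 2"
    if "2 \<le> N" "0 < u" "u < 1" "grid_round N u < 1" for N u
  proof -
    have "Q (grid_round N u) ^ 2 \<le> Q u ^ 2"
      using Q_grid_round_le[of N u] that by (intro power_mono) auto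
    then show ?thesis
      by simp
  qed
  have last: "\<bar>Q u ^ 2 - Q (grid_round N u) ^ 2\<bar> \<le> Q (1/2) ^ 2 + Q 1 ^ 2"
    if "2 \<le> N" "0 < u" "u < 1" "grid_round N u = 1" for N u
  proof -
    have "Q u ^ 2 \<le> Q (1/2) ^ 2"
      using Q_last_cell[OF that] by (intro power_mono) auto
    then show ?thesis
      using zero_le_power2[of "Q u"] zero_le_power2[of "Q 1"] unfolding that(4) abs_le_iff by linarith
  qed
  have ?bigo
    by (rule grid_error_bigo[where G = "\<lambda>u. Q u ^ 2" and D = "D\<^sup>2" and M = "Q (1/2) ^ 2 + Q 1 ^ 2"])
      (use antimono_on_Q_sq Q_sq_le_powr \<beta> int inner last in auto)
  with int show ?thesis
    by blast
qed

lemma grid_error_mult_diff: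
  "(\<forall>N\<ge>1. set_integrable lborel {0<..<1} (\<lambda>u. Q u * (Q u - Q (grid_round N u))))
   \<and> (\<lambda>N. LINT u:{0<..<1}|lborel. Q u * (Q u - Q (grid_round N u))) \<in> O(\<lambda>N. real N powr - (1 - 2 * \<beta>))"
  (is "_ \<and> ?bigo")
proof -
  have int: "set_integrable lborel {0<..<1} (\<lambda>u. Q u * (Q u - Q (grid_round N u)))" if "1 \<le> N" for N
  proof -
    have "set_integrable lborel {0<..<1} (\<lambda>u. Q u ^ 2 - Q u * Q (grid_round N u))"
      using set_integrable_Q_sq set_integrable_mult_grid_round[OF set_integrable_Q that]
      by (rule set_integral_diff(1))
    then show ?thesis
      by (simp add: power2_eq_square right_diff_distrib)
  qed
  have inner: "\<bar>Q u * (Q u - Q (grid_round N u))\<bar> \<le> Q u ^ 2 - Q (grid_round N u) ^ 2"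
    if "2 \<le> N" "0 < u" "u < 1" "grid_round N u < 1" for N u
  proof -
    have v: "0 \<le> Q (grid_round N u)" "Q (grid_round N u) \<le> Q u"
      using Q_grid_round_le[of N u] that by auto
    then have "\<bar>Q u * (Q u - Q (grid_round N u))\<bar> = Q u * (Q u - Q (grid_round N u))"
      by (intro abs_of_nonneg mult_nonneg_nonneg) auto
    also have "\<dots> \<le> Q u ^ 2 - Q (grid_round N u) ^ 2"
      using mult_right_mono[OF v(2) v(1)] by (simp add: power2_eq_square algebra_simps)
    finally show ?thesis .
  qed
  have last: "\<bar>Q u * (Q u - Q (grid_round N u))\<bar> \<le> Q (1/2) * (Q (1/2) + \<bar>Q 1\<bar>)"
    if "2 \<le> N" "0 < u" "u < 1" "grid_round N u = 1" for N u
    using Q_last_cell[OF that] that(4) by (simp add: abs_mult mult_mono)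
  have ?bigo
    by (rule grid_error_bigo[where G = "\<lambda>u. Q u ^ 2" and D = "D\<^sup>2"
          and M = "Q (1/2) * (Q (1/2) + \<bar>Q 1\<bar>)"])
      (use antimono_on_Q_sq Q_sq_le_powr Q_nonneg[of "1/2"] \<beta> int inner last in auto)
  with int show ?thesis
    by blast
qed

end

theorem lemmaB1:
  fixes F f :: "real \<Rightarrow> real" and c \<tau> :: real
  assumes F_mono: "mono F"
    and F_bot: "(F \<longlongrightarrow> 0) at_bot"
    and F_top: "(F \<longlongrightarrow> 1) at_top"
    and F_cont: "continuous_on UNIV F"
    and F0: "F 0 = 0"
    and f_nonneg: "\<And>x. x \<ge> 0 \<Longrightarrow> f x \<ge> 0"
    and f_density: "\<And>x. x \<ge> 0 \<Longrightarrow>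
        set_integrable lborel {0..x} f \<and> F x = (LINT t:{0..x}|lborel. f t)"
    and c_pos: "c > 0" and tau: "\<tau> > 3"
    and tail: "\<And>x. x > 0 \<Longrightarrow> 1 - F x \<le> c * x powr (1 - \<tau>)"
    and quant: "\<exists>a>0. \<exists>C. \<exists>\<delta>>0. \<forall>y. 0 < y \<and> y < \<delta> \<longrightarrow>
        (\<integral>\<^sup>+ u. indicator {y..1} u *
            (ennreal (surv_inv F u) / ennreal (dens_low f (surv_inv F u))) \<partial>lborel)
          \<le> ennreal (C * y powr (-a))"
  shows "\<exists>\<alpha>>0.
     (\<forall>N\<ge>1. set_integrable lborel {0<..<1}
          (\<lambda>u. surv_inv F u * (surv_inv F u - surv_inv F (grid_round N u))))
   \<and> (\<lambda>N. LINT u:{0<..<1}|lborel.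
          surv_inv F u * (surv_inv F u - surv_inv F (grid_round N u)))
       \<in> O(\<lambda>N. real N powr (-\<alpha>))
   \<and> (\<forall>i\<in>{1::nat,2}.
        (\<forall>N\<ge>1. set_integrable lborel {0<..<1}
          (\<lambda>u. surv_inv F u ^ i - surv_inv F (grid_round N u) ^ i))
      \<and> (\<lambda>N. LINT u:{0<..<1}|lborel.
            surv_inv F u ^ i - surv_inv F (grid_round N u) ^ i)
         \<in> O(\<lambda>N. real N powr (-\<alpha>)))"
proof -
  define \<beta> where "\<beta> = 1 / (\<tau> - 1)"
  have \<beta>: "0 \<le> \<beta>" "\<beta> < 1/2"
    using tau by (auto simp: \<beta>_def field_simps)
  interpret Q: antitone_powr_bounded "surv_inv F" "c powr \<beta>" \<beta>
  proof
    show "antimono_on {0<..<1} (surv_inv F)"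
      by (rule antimono_on_surv_inv[OF F_mono F_top F0])
    fix u :: real
    assume u: "0 < u" "u < 1"
    then show "0 \<le> surv_inv F u"
      by (rule surv_inv_nonneg[OF F_mono F_top F0])
    have "surv_inv F u \<le> c powr (1 / (\<tau> - 1)) * u powr - (1 / (\<tau> - 1))"
      by (rule surv_inv_le_powr[OF F_mono F_top F0 c_pos]) (use tau tail u in auto)
    then show "surv_inv F u \<le> c powr \<beta> * u powr - \<beta>"
      by (simp add: \<beta>_def)
  qed (use \<beta> in auto)
  show ?thesis
    using Q.grid_error_diff Q.grid_error_diff_sq Q.grid_error_mult_diff \<beta>
    by (intro exI[of _ "1 - 2 * \<beta>"]) auto
qed

end
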